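(* Let $(\mathbf M,\tau)$ be a state BL-algebra satisfying: (a) if $\tau$ is faithful, then $\tau(\mathbf M)$ is a subdirectly irreducible BL-algebra; (b) $\mathrm{Ker}(\tau)$ is either the trivial hoop $\{1\}$ or a subdirectly irreducible hoop; (c) $\mathrm{Ker}(\tau)$ and $\tau(M)$ have the disjunction property, i.e. for all $x\in\mathrm{Ker}(\tau)$ and $y\in\tau(M)$, $x\vee y=1$ implies $x=1$ or $y=1$. Then $(\mathbf M,\tau)$ is subdirectly irreducible.
   Context: A BL-algebra is an algebra $\mathbf M=(M;\wedge,\vee,\odot,\to,0,1)$ of type $\langle 2,2,2,2,0,0\rangle$ such that $(M;\wedge,\vee,0,1)$ is a bounded lattice, $(M;\odot,1)$ is a commutative monoid, and for all $a,b,c$: $c\le a\to b$ iff $a\odot c\le b$; $a\wedge b=a\odot(a\to b)$; $(a\to b)\vee(b\to a)=1$. A filter is a nonempty subset closed under $\odot$ and upward closed. A state-operator on $\mathbf M$ is a map $\tau:M\to M$ such that for all $x,y$: $\tau(0)=0$; $\tau(x\to y)=\tau(x)\to\tau(x\wedge y)$; $\tau(x\odot y)=\tau(x)\odot\tau(x\to(x\odot y))$; $\tau(\tau(x)\odot\tau(y))=\tau(x)\odot\tau(y)$; $\tau(\tau(x)\to\tau(y))=\tau(x)\to\tau(y)$; $(\mathbf M,\tau)$ is a state BL-algebra (algebra with extra unary operation $\tau$). Its congruences correspond to $\tau$-filters (filters $F$ with $\tau(F)\subseteq F$), so it is subdirectly irreducible iff it has a least $\tau$-filter different from $\{1\}$.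 $\mathrm{Ker}(\tau)=\{a:\tau(a)=1\}$; $\tau$ is faithful if $\mathrm{Ker}(\tau)=\{1\}$. $\tau(M)$ is a subalgebra (BL-algebra $\tau(\mathbf M)$). $\mathrm{Ker}(\tau)$ is a hoop under $\odot,\to,1$; its filters are nonempty subsets closed under $\odot$ and upward closed in $\mathrm{Ker}(\tau)$, and it is subdirectly irreducible if it has a least filter different from $\{1\}$. *)

theory Defs
  imports Main
begin

definition lat_le :: "('a \<Rightarrow> 'a \<Rightarrow> 'a) \<Rightarrow> 'a \<Rightarrow> 'a \<Rightarrow> bool" where
  "lat_le meet x y \<longleftrightarrow> meet x y = x"

definition BL_algebra ::
  "'a set \<Rightarrow> ('a \<Rightarrow> 'a \<Rightarrow> 'a) \<Rightarrow> ('a \<Rightarrow> 'a \<Rightarrow> 'a) \<Rightarrow> ('a \<Rightarrow> 'a \<Rightarrow> 'a)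
    \<Rightarrow> ('a \<Rightarrow> 'a \<Rightarrow> 'a) \<Rightarrow> 'a \<Rightarrow> 'a \<Rightarrow> bool" where
  "BL_algebra M meet join mult imp zero one \<longleftrightarrow>
     zero \<in> M \<and> one \<in> M \<and>
     (\<forall>x\<in>M. \<forall>y\<in>M. meet x y \<in> M \<and> join x y \<in> M \<and> mult x y \<in> M \<and> imp x y \<in> M) \<and>
     \<comment> \<open>bounded lattice\<close>
     (\<forall>x\<in>M. \<forall>y\<in>M. meet x y = meet y x \<and> join x y = join y x) \<and>
     (\<forall>x\<in>M. \<forall>y\<in>M. \<forall>z\<in>M. meet (meet x y) z = meet x (meet y z) \<and>
                             join (join x y) z = join x (join y z)) \<and>
     (\<forall>x\<in>M. \<forall>y\<in>M. meet x (join x y) = x \<and> join x (meet x y) = x) \<and>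
     (\<forall>x\<in>M. lat_le meet zero x \<and> lat_le meet x one) \<and>
     \<comment> \<open>commutative monoid\<close>
     (\<forall>x\<in>M. \<forall>y\<in>M. \<forall>z\<in>M. mult (mult x y) z = mult x (mult y z)) \<and>
     (\<forall>x\<in>M. \<forall>y\<in>M. mult x y = mult y x) \<and>
     (\<forall>x\<in>M. mult x one = x) \<and>
     \<comment> \<open>residuation, divisibility, prelinearity\<close>
     (\<forall>a\<in>M. \<forall>b\<in>M. \<forall>c\<in>M. lat_le meet c (imp a b) \<longleftrightarrow> lat_le meet (mult a c) b) \<and>
     (\<forall>a\<in>M. \<forall>b\<in>M. meet a b = mult a (imp a b)) \<and>
     (\<forall>a\<in>M. \<forall>b\<in>M. join (imp a b) (imp b a) = one)"

definition state_operator ::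
  "'a set \<Rightarrow> ('a \<Rightarrow> 'a \<Rightarrow> 'a) \<Rightarrow> ('a \<Rightarrow> 'a \<Rightarrow> 'a) \<Rightarrow> ('a \<Rightarrow> 'a \<Rightarrow> 'a)
    \<Rightarrow> ('a \<Rightarrow> 'a \<Rightarrow> 'a) \<Rightarrow> 'a \<Rightarrow> 'a \<Rightarrow> ('a \<Rightarrow> 'a) \<Rightarrow> bool" where
  "state_operator M meet join mult imp zero one tau \<longleftrightarrow>
     (\<forall>x\<in>M. tau x \<in> M) \<and>
     tau zero = zero \<and>
     (\<forall>x\<in>M. \<forall>y\<in>M. tau (imp x y) = imp (tau x) (tau (meet x y))) \<and>
     (\<forall>x\<in>M. \<forall>y\<in>M. tau (mult x y) = mult (tau x) (tau (imp x (mult x y)))) \<and>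
     (\<forall>x\<in>M. \<forall>y\<in>M. tau (mult (tau x) (tau y)) = mult (tau x) (tau y)) \<and>
     (\<forall>x\<in>M. \<forall>y\<in>M. tau (imp (tau x) (tau y)) = imp (tau x) (tau y))"

definition state_BL_algebra ::
  "'a set \<Rightarrow> ('a \<Rightarrow> 'a \<Rightarrow> 'a) \<Rightarrow> ('a \<Rightarrow> 'a \<Rightarrow> 'a) \<Rightarrow> ('a \<Rightarrow> 'a \<Rightarrow> 'a)
    \<Rightarrow> ('a \<Rightarrow> 'a \<Rightarrow> 'a) \<Rightarrow> 'a \<Rightarrow> 'a \<Rightarrow> ('a \<Rightarrow> 'a) \<Rightarrow> bool" where
  "state_BL_algebra M meet join mult imp zero one tau \<longleftrightarrow>
     BL_algebra M meet join mult imp zero one \<and>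
     state_operator M meet join mult imp zero one tau"

definition BL_filter ::
  "'a set \<Rightarrow> ('a \<Rightarrow> 'a \<Rightarrow> 'a) \<Rightarrow> ('a \<Rightarrow> 'a \<Rightarrow> 'a) \<Rightarrow> 'a set \<Rightarrow> bool" where
  "BL_filter S meet mult F \<longleftrightarrow>
     F \<subseteq> S \<and> F \<noteq> {} \<and>
     (\<forall>x\<in>F. \<forall>y\<in>F. mult x y \<in> F) \<and>
     (\<forall>x\<in>F. \<forall>y\<in>S. lat_le meet x y \<longrightarrow> y \<in> F)"

definition hoop_filter ::
  "'a set \<Rightarrow> ('a \<Rightarrow> 'a \<Rightarrow> 'a) \<Rightarrow> ('a \<Rightarrow> 'a \<Rightarrow> 'a) \<Rightarrow> 'a \<Rightarrow> 'a set \<Rightarrow> bool" where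
  "hoop_filter H mult imp one F \<longleftrightarrow>
     F \<subseteq> H \<and> F \<noteq> {} \<and>
     (\<forall>x\<in>F. \<forall>y\<in>F. mult x y \<in> F) \<and>
     (\<forall>x\<in>F. \<forall>y\<in>H. imp x y = one \<longrightarrow> y \<in> F)"

definition tau_filter ::
  "'a set \<Rightarrow> ('a \<Rightarrow> 'a \<Rightarrow> 'a) \<Rightarrow> ('a \<Rightarrow> 'a \<Rightarrow> 'a) \<Rightarrow> ('a \<Rightarrow> 'a) \<Rightarrow> 'a set \<Rightarrow> bool" where
  "tau_filter M meet mult tau F \<longleftrightarrow> BL_filter M meet mult F \<and> tau ` F \<subseteq> F"

text \<open>A structure is subdirectly irreducible iff it has a least filter (of the relevant kind)
  different from the trivial filter {one}.\<close>
definition least_nontrivial :: "('a set \<Rightarrow> bool) \<Rightarrow> 'a \<Rightarrow> bool" where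
  "least_nontrivial P one \<longleftrightarrow>
     (\<exists>F0. P F0 \<and> F0 \<noteq> {one} \<and> (\<forall>F. P F \<and> F \<noteq> {one} \<longrightarrow> F0 \<subseteq> F))"

definition SI_state_BL ::
  "'a set \<Rightarrow> ('a \<Rightarrow> 'a \<Rightarrow> 'a) \<Rightarrow> ('a \<Rightarrow> 'a \<Rightarrow> 'a) \<Rightarrow> 'a \<Rightarrow> ('a \<Rightarrow> 'a) \<Rightarrow> bool" where
  "SI_state_BL M meet mult one tau \<longleftrightarrow> least_nontrivial (tau_filter M meet mult tau) one"

definition SI_BL ::
  "'a set \<Rightarrow> ('a \<Rightarrow> 'a \<Rightarrow> 'a) \<Rightarrow> ('a \<Rightarrow> 'a \<Rightarrow> 'a) \<Rightarrow> 'a \<Rightarrow> bool" where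
  "SI_BL S meet mult one \<longleftrightarrow> least_nontrivial (BL_filter S meet mult) one"

definition SI_hoop ::
  "'a set \<Rightarrow> ('a \<Rightarrow> 'a \<Rightarrow> 'a) \<Rightarrow> ('a \<Rightarrow> 'a \<Rightarrow> 'a) \<Rightarrow> 'a \<Rightarrow> bool" where
  "SI_hoop H mult imp one \<longleftrightarrow> least_nontrivial (hoop_filter H mult imp one) one"

definition Ker :: "'a set \<Rightarrow> 'a \<Rightarrow> ('a \<Rightarrow> 'a) \<Rightarrow> 'a set" where
  "Ker M one tau = {a \<in> M. tau a = one}"

definition faithful :: "'a set \<Rightarrow> 'a \<Rightarrow> ('a \<Rightarrow> 'a) \<Rightarrow> bool" where
  "faithful M one tau \<longleftrightarrow> Ker M one tau = {one}"

end

theory Submission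
  imports Defs
begin

text \<open>Let F be a nontrivial \<tau>-filter. If \<tau> is faithful, any a \<in> F with a \<noteq> 1 gives \<tau> a \<in> F \<inter> \<tau>(M)
  with \<tau> a \<noteq> 1. Otherwise pick k \<in> Ker \<tau> with k \<noteq> 1; if \<tau> a \<noteq> 1, then k \<or> \<tau> a lies in
  F \<inter> Ker \<tau> and differs from 1 by the disjunction property. In both cases the trace of F is a
  nontrivial filter of \<tau>(M), resp. of the hoop Ker \<tau>, hence contains the least one, G0. The
  upward closure of G0 in M is a \<tau>-filter, so it is the least nontrivial \<tau>-filter.\<close>

locale bl_algebra =
  fixes M :: "'a set" and meet join mult imp :: "'a \<Rightarrow> 'a \<Rightarrow> 'a" and zero one :: 'a
  assumes BL_algebra: "BL_algebra M meet join mult imp zero one"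
begin

abbreviation leq :: "'a \<Rightarrow> 'a \<Rightarrow> bool" (infix "\<preceq>" 50) where
  "x \<preceq> y \<equiv> lat_le meet x y"

lemma one_closed [simp]: "one \<in> M"
  and meet_closed [simp]: "x \<in> M \<Longrightarrow> y \<in> M \<Longrightarrow> meet x y \<in> M"
  and join_closed [simp]: "x \<in> M \<Longrightarrow> y \<in> M \<Longrightarrow> join x y \<in> M"
  and mult_closed [simp]: "x \<in> M \<Longrightarrow> y \<in> M \<Longrightarrow> mult x y \<in> M"
  and imp_closed [simp]: "x \<in> M \<Longrightarrow> y \<in> M \<Longrightarrow> imp x y \<in> M"
  using BL_algebra by (auto simp: BL_algebra_def)

lemma meet_commute: "x \<in> M \<Longrightarrow> y \<in> M \<Longrightarrow> meet x y = meet y x"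
  and join_commute: "x \<in> M \<Longrightarrow> y \<in> M \<Longrightarrow> join x y = join y x"
  and meet_assoc: "x \<in> M \<Longrightarrow> y \<in> M \<Longrightarrow> z \<in> M \<Longrightarrow> meet (meet x y) z = meet x (meet y z)"
  and meet_absorb_join: "x \<in> M \<Longrightarrow> y \<in> M \<Longrightarrow> meet x (join x y) = x"
  and join_absorb_meet: "x \<in> M \<Longrightarrow> y \<in> M \<Longrightarrow> join x (meet x y) = x"
  and le_one: "x \<in> M \<Longrightarrow> x \<preceq> one"
  and mult_commute: "x \<in> M \<Longrightarrow> y \<in> M \<Longrightarrow> mult x y = mult y x"
  and mult_one [simp]: "x \<in> M \<Longrightarrow> mult x one = x"
  and residuation: "a \<in> M \<Longrightarrow> b \<in> M \<Longrightarrow> c \<in> M \<Longrightarrow> c \<preceq> imp a b \<longleftrightarrow> mult a c \<preceq> b"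
  and divisibility: "a \<in> M \<Longrightarrow> b \<in> M \<Longrightarrow> meet a b = mult a (imp a b)"
  using BL_algebra unfolding BL_algebra_def by auto

lemma lat_le_refl: "x \<in> M \<Longrightarrow> x \<preceq> x"
  unfolding lat_le_def by (metis join_absorb_meet meet_absorb_join meet_closed)

lemma lat_le_trans: "x \<in> M \<Longrightarrow> y \<in> M \<Longrightarrow> z \<in> M \<Longrightarrow> x \<preceq> y \<Longrightarrow> y \<preceq> z \<Longrightarrow> x \<preceq> z"
  unfolding lat_le_def by (metis meet_assoc)

lemma lat_le_antisym: "x \<in> M \<Longrightarrow> y \<in> M \<Longrightarrow> x \<preceq> y \<Longrightarrow> y \<preceq> x \<Longrightarrow> x = y"
  unfolding lat_le_def by (metis meet_commute)

lemma one_le_iff: "x \<in> M \<Longrightarrow> one \<preceq> x \<longleftrightarrow> x = one"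
  using lat_le_antisym[of one x] le_one[of x] lat_le_refl[of one] by auto

lemma imp_eq_one_iff: "x \<in> M \<Longrightarrow> y \<in> M \<Longrightarrow> imp x y = one \<longleftrightarrow> x \<preceq> y"
  using residuation[of x y one] one_le_iff[of "imp x y"] by simp

lemma mult_mono_right: "x \<in> M \<Longrightarrow> y \<in> M \<Longrightarrow> z \<in> M \<Longrightarrow> x \<preceq> y \<Longrightarrow> mult z x \<preceq> mult z y"
  using residuation[of z "mult z y"] lat_le_refl lat_le_trans by (meson imp_closed mult_closed)

lemma mult_mono:
  "x \<in> M \<Longrightarrow> y \<in> M \<Longrightarrow> u \<in> M \<Longrightarrow> v \<in> M \<Longrightarrow> x \<preceq> y \<Longrightarrow> u \<preceq> v \<Longrightarrow> mult x u \<preceq> mult y v"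
  using mult_mono_right[of x y v] mult_mono_right[of u v x] lat_le_trans mult_commute
  by (metis mult_closed)

lemma mult_le_left: "x \<in> M \<Longrightarrow> y \<in> M \<Longrightarrow> mult x y \<preceq> x"
  using mult_mono_right[of y one x] le_one by simp

lemma le_join1: "x \<in> M \<Longrightarrow> y \<in> M \<Longrightarrow> x \<preceq> join x y"
  unfolding lat_le_def by (rule meet_absorb_join)

lemma le_join2: "x \<in> M \<Longrightarrow> y \<in> M \<Longrightarrow> y \<preceq> join x y"
  using le_join1 join_commute by metis

lemma BL_filter_one:
  assumes "BL_filter M meet mult F"
  shows "one \<in> F"
proof -
  obtain f where "f \<in> F"
    using assms unfolding BL_filter_def by blast
  then show ?thesis
    using assms le_one[of f] unfolding BL_filter_def by auto
qed

definition up_closure :: "'a set \<Rightarrow> 'a set" where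
  "up_closure G = {z \<in> M. \<exists>g\<in>G. g \<preceq> z}"

lemma subset_up_closure: "G \<subseteq> M \<Longrightarrow> G \<subseteq> up_closure G"
  unfolding up_closure_def using lat_le_refl by blast

lemma up_closure_subset_filter: "BL_filter M meet mult F \<Longrightarrow> G \<subseteq> F \<Longrightarrow> up_closure G \<subseteq> F"
  unfolding up_closure_def BL_filter_def by blast

lemma BL_filter_up_closure:
  assumes "G \<subseteq> M" "G \<noteq> {}" "\<forall>a\<in>G. \<forall>b\<in>G. mult a b \<in> G"
  shows "BL_filter M meet mult (up_closure G)"
  unfolding BL_filter_def
proof (intro conjI ballI impI)
  show "up_closure G \<subseteq> M"
    unfolding up_closure_def by blast
  show "up_closure G \<noteq> {}"
    using assms(1,2) subset_up_closure by blast
next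
  fix x y assume "x \<in> up_closure G" "y \<in> up_closure G"
  then obtain g h where "g \<in> G" "h \<in> G" "g \<preceq> x" "h \<preceq> y" "x \<in> M" "y \<in> M"
    unfolding up_closure_def by blast
  moreover have "mult g h \<preceq> mult x y"
    using calculation assms(1) by (intro mult_mono) auto
  ultimately show "mult x y \<in> up_closure G"
    unfolding up_closure_def using assms(3) by auto
next
  fix x y assume "x \<in> up_closure G" "y \<in> M" "x \<preceq> y"
  then show "y \<in> up_closure G"
    unfolding up_closure_def using assms(1) lat_le_trans by blast
qed

end

locale state_bl_algebra = bl_algebra +
  fixes tau :: "'a \<Rightarrow> 'a"
  assumes state_operator: "state_operator M meet join mult imp zero one tau"
begin

lemma tau_closed [simp]: "x \<in> M \<Longrightarrow> tau x \<in> M"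
  and tau_imp: "x \<in> M \<Longrightarrow> y \<in> M \<Longrightarrow> tau (imp x y) = imp (tau x) (tau (meet x y))"
  and tau_mult: "x \<in> M \<Longrightarrow> y \<in> M \<Longrightarrow> tau (mult x y) = mult (tau x) (tau (imp x (mult x y)))"
  and tau_mult_tau: "x \<in> M \<Longrightarrow> y \<in> M \<Longrightarrow> tau (mult (tau x) (tau y)) = mult (tau x) (tau y)"
  using state_operator unfolding state_operator_def by blast+

lemma tau_one [simp]: "tau one = one"
proof -
  have "meet one one = one" "imp one one = one"
    using lat_le_refl[of one] imp_eq_one_iff[of one one] by (simp_all add: lat_le_def)
  then have "tau one = imp (tau one) (tau one)"
    using tau_imp[of one one] by simp
  also have "\<dots> = one"
    using imp_eq_one_iff[of "tau one" "tau one"] lat_le_refl[of "tau one"] by simp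
  finally show ?thesis .
qed

lemma tau_idem: "x \<in> M \<Longrightarrow> tau (tau x) = tau x"
  using tau_mult_tau[of x one] by simp

lemma tau_mono: "x \<in> M \<Longrightarrow> y \<in> M \<Longrightarrow> x \<preceq> y \<Longrightarrow> tau x \<preceq> tau y"
proof -
  assume xy: "x \<in> M" "y \<in> M" "x \<preceq> y"
  then have "x = mult y (imp y x)"
    using divisibility[of y x] meet_commute unfolding lat_le_def by metis
  then have "tau x = mult (tau y) (tau (imp y (mult y (imp y x))))"
    using tau_mult[of y "imp y x"] xy by simp
  then show ?thesis
    using mult_le_left xy by simp
qed

lemma image_mult_closed: "a \<in> tau ` M \<Longrightarrow> b \<in> tau ` M \<Longrightarrow> mult a b \<in> tau ` M"
  using tau_mult_tau by (metis image_eqI image_iff mult_closed tau_closed)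

lemma Ker_upward_closed: "x \<in> Ker M one tau \<Longrightarrow> y \<in> M \<Longrightarrow> x \<preceq> y \<Longrightarrow> y \<in> Ker M one tau"
  unfolding Ker_def using tau_mono one_le_iff by fastforce

lemma Ker_mult_closed:
  assumes "x \<in> Ker M one tau" "y \<in> Ker M one tau"
  shows "mult x y \<in> Ker M one tau"
proof -
  have xy: "x \<in> M" "y \<in> M" "tau x = one" "tau y = one"
    using assms unfolding Ker_def by auto
  then have "y \<preceq> imp x (mult x y)"
    using residuation lat_le_refl by simp
  then have "tau (imp x (mult x y)) = one"
    using Ker_upward_closed[of y] xy unfolding Ker_def by simp
  then show ?thesis
    using tau_mult xy unfolding Ker_def by simp
qed

lemma one_in_Ker: "one \<in> Ker M one tau"
  unfolding Ker_def by simp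

lemma SI_state_BL_if_least_generator:
  assumes G: "G \<subseteq> M" "G \<noteq> {}" "\<forall>a\<in>G. \<forall>b\<in>G. mult a b \<in> G" "G \<noteq> {one}"
    and tau_up: "tau ` up_closure G \<subseteq> up_closure G"
    and least: "\<And>F. tau_filter M meet mult tau F \<Longrightarrow> F \<noteq> {one} \<Longrightarrow> G \<subseteq> F"
  shows "SI_state_BL M meet mult one tau"
  unfolding SI_state_BL_def least_nontrivial_def
proof (intro exI conjI allI impI)
  show "tau_filter M meet mult tau (up_closure G)"
    unfolding tau_filter_def using BL_filter_up_closure[OF G(1-3)] tau_up by blast
  show "up_closure G \<noteq> {one}"
    using subset_up_closure[OF G(1)] G(2,4) by (metis subset_singletonD)
  fix F assume "tau_filter M meet mult tau F \<and> F \<noteq> {one}"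
  then show "up_closure G \<subseteq> F"
    using least[of F] up_closure_subset_filter[of F G] unfolding tau_filter_def by blast
qed

lemma BL_filter_image_trace:
  assumes F: "BL_filter M meet mult F"
  shows "BL_filter (tau ` M) meet mult (F \<inter> tau ` M)"
  unfolding BL_filter_def
proof (intro conjI ballI impI)
  show "F \<inter> tau ` M \<subseteq> tau ` M" by blast
  have "one \<in> tau ` M"
    using tau_one one_closed by (metis image_eqI)
  then show "F \<inter> tau ` M \<noteq> {}"
    using BL_filter_one[OF F] by blast
next
  fix x y assume "x \<in> F \<inter> tau ` M" "y \<in> F \<inter> tau ` M"
  then show "mult x y \<in> F \<inter> tau ` M"
    using F image_mult_closed unfolding BL_filter_def by blast
next
  fix x y assume "x \<in> F \<inter> tau ` M" "y \<in> tau ` M" "x \<preceq> y"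
  moreover have "tau ` M \<subseteq> M"
    by auto
  ultimately show "y \<in> F \<inter> tau ` M"
    using F unfolding BL_filter_def by blast
qed

lemma hoop_filter_Ker_trace:
  assumes F: "BL_filter M meet mult F"
  shows "hoop_filter (Ker M one tau) mult imp one (F \<inter> Ker M one tau)"
  unfolding hoop_filter_def
proof (intro conjI ballI impI)
  show "F \<inter> Ker M one tau \<subseteq> Ker M one tau" by blast
  show "F \<inter> Ker M one tau \<noteq> {}"
    using BL_filter_one[OF F] one_in_Ker by blast
next
  fix x y assume "x \<in> F \<inter> Ker M one tau" "y \<in> F \<inter> Ker M one tau"
  then show "mult x y \<in> F \<inter> Ker M one tau"
    using F Ker_mult_closed[of x y] unfolding BL_filter_def by blast
next
  fix x y assume x: "x \<in> F \<inter> Ker M one tau" and y: "y \<in> Ker M one tau" and "imp x y = one"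
  then have "x \<preceq> y" "y \<in> M"
    using imp_eq_one_iff[of x y] unfolding Ker_def by auto
  then show "y \<in> F \<inter> Ker M one tau"
    using F x y unfolding BL_filter_def by blast
qed

lemma tau_up_closure_image_filter:
  assumes G: "BL_filter (tau ` M) meet mult G"
  shows "tau ` up_closure G \<subseteq> up_closure G"
proof clarify
  have G_sub: "G \<subseteq> tau ` M"
    and G_up: "\<And>x y. x \<in> G \<Longrightarrow> y \<in> tau ` M \<Longrightarrow> x \<preceq> y \<Longrightarrow> y \<in> G"
    using G unfolding BL_filter_def by blast+
  fix z assume "z \<in> up_closure G"
  then obtain g where g: "g \<in> G" "g \<preceq> z" and z: "z \<in> M"
    unfolding up_closure_def by blast
  then obtain w where "w \<in> M" "g = tau w"
    using G_sub by blast
  then have "g \<preceq> tau z"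
    using tau_mono[of g z] tau_idem g z by simp
  then have "tau z \<in> G"
    using G_up g z by blast
  moreover have "G \<subseteq> M"
    using G_sub by auto
  ultimately show "tau z \<in> up_closure G"
    using subset_up_closure by blast
qed

lemma tau_up_closure_Ker_subset:
  assumes H: "H \<subseteq> Ker M one tau" "H \<noteq> {}"
  shows "tau ` up_closure H \<subseteq> up_closure H"
proof clarify
  have H_M: "H \<subseteq> M"
    using H(1) unfolding Ker_def by blast
  fix z assume "z \<in> up_closure H"
  then obtain h where h: "h \<in> H" "h \<preceq> z" and z: "z \<in> M"
    unfolding up_closure_def by blast
  then have "z \<in> Ker M one tau"
    using H(1) Ker_upward_closed[of h z] by blast
  then have "tau z = one"
    unfolding Ker_def by simp
  moreover have "one \<in> up_closure H"
    using h(1) H_M le_one[of h] unfolding up_closure_def by auto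
  ultimately show "tau z \<in> up_closure H"
    by simp
qed

lemma tau_filter_meets_image:
  assumes faithful: "faithful M one tau"
    and F: "tau_filter M meet mult tau F" "F \<noteq> {one}"
  shows "F \<inter> tau ` M \<noteq> {one}"
proof -
  have BF: "BL_filter M meet mult F" and tau_F: "tau ` F \<subseteq> F"
    using F(1) unfolding tau_filter_def by blast+
  obtain a where a: "a \<in> F" "a \<noteq> one"
    using F(2) BL_filter_one[OF BF] by blast
  then have "a \<in> M"
    using BF unfolding BL_filter_def by blast
  moreover have "tau a \<noteq> one"
  proof
    assume "tau a = one"
    with \<open>a \<in> M\<close> have "a \<in> Ker M one tau"
      unfolding Ker_def by simp
    with faithful a(2) show False
      unfolding faithful_def by simp
  qed
  moreover have "tau a \<in> F"
    using tau_F a(1) by blast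
  ultimately show ?thesis
    by blast
qed

lemma tau_filter_meets_Ker:
  assumes nontrivial: "Ker M one tau \<noteq> {one}"
    and disj: "\<forall>x\<in>Ker M one tau. \<forall>y\<in>tau ` M. join x y = one \<longrightarrow> x = one \<or> y = one"
    and F: "tau_filter M meet mult tau F" "F \<noteq> {one}"
  shows "F \<inter> Ker M one tau \<noteq> {one}"
proof -
  have BF: "BL_filter M meet mult F" and tau_F: "tau ` F \<subseteq> F"
    using F(1) unfolding tau_filter_def by blast+
  obtain a where a: "a \<in> F" "a \<noteq> one"
    using F(2) BL_filter_one[OF BF] by blast
  have aM: "a \<in> M" and F_up: "\<And>x y. x \<in> F \<Longrightarrow> y \<in> M \<Longrightarrow> x \<preceq> y \<Longrightarrow> y \<in> F"
    using BF a(1) unfolding BL_filter_def by blast+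
  obtain k where k: "k \<in> Ker M one tau" "k \<noteq> one"
    using nontrivial one_in_Ker by blast
  then have kM: "k \<in> M"
    unfolding Ker_def by blast
  have "\<exists>j\<in>F \<inter> Ker M one tau. j \<noteq> one"
  proof (cases "tau a = one")
    case True
    then show ?thesis
      using a aM unfolding Ker_def by blast
  next
    case False
    let ?j = "join k (tau a)"
    have "?j \<in> F"
      using F_up[of "tau a" ?j] tau_F a(1) le_join2[of k "tau a"] kM aM by auto
    moreover have "?j \<in> Ker M one tau"
      using Ker_upward_closed[OF k(1)] le_join1[of k "tau a"] kM aM by simp
    moreover have "?j \<noteq> one"
      using disj k False aM by blast
    ultimately show ?thesis
      by blast
  qed
  then show ?thesis
    by blast
qed

lemma SI_state_BL_if_faithful:
  assumes faithful: "faithful M one tau" and SI: "SI_BL (tau ` M) meet mult one"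
  shows "SI_state_BL M meet mult one tau"
proof -
  obtain G where G: "BL_filter (tau ` M) meet mult G" "G \<noteq> {one}"
    and least: "\<forall>F. BL_filter (tau ` M) meet mult F \<and> F \<noteq> {one} \<longrightarrow> G \<subseteq> F"
    using SI unfolding SI_BL_def least_nontrivial_def by blast
  have G_M: "G \<subseteq> M" and G_ne: "G \<noteq> {}" and G_mult: "\<forall>a\<in>G. \<forall>b\<in>G. mult a b \<in> G"
    using G(1) unfolding BL_filter_def by auto
  have "G \<subseteq> F" if F: "tau_filter M meet mult tau F" "F \<noteq> {one}" for F
    using least BL_filter_image_trace tau_filter_meets_image[OF faithful F] F(1)
    unfolding tau_filter_def by blast
  then show ?thesis
    using SI_state_BL_if_least_generator[OF G_M G_ne G_mult G(2)]
      tau_up_closure_image_filter[OF G(1)] by blast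
qed

lemma SI_state_BL_if_Ker_SI:
  assumes nontrivial: "Ker M one tau \<noteq> {one}" and SI: "SI_hoop (Ker M one tau) mult imp one"
    and disj: "\<forall>x\<in>Ker M one tau. \<forall>y\<in>tau ` M. join x y = one \<longrightarrow> x = one \<or> y = one"
  shows "SI_state_BL M meet mult one tau"
proof -
  obtain H where H: "hoop_filter (Ker M one tau) mult imp one H" "H \<noteq> {one}"
    and least: "\<forall>F. hoop_filter (Ker M one tau) mult imp one F \<and> F \<noteq> {one} \<longrightarrow> H \<subseteq> F"
    using SI unfolding SI_hoop_def least_nontrivial_def by blast
  have H_Ker: "H \<subseteq> Ker M one tau" and H_ne: "H \<noteq> {}"
    and H_mult: "\<forall>a\<in>H. \<forall>b\<in>H. mult a b \<in> H"
    using H(1) unfolding hoop_filter_def by blast+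
  have H_M: "H \<subseteq> M"
    using H_Ker unfolding Ker_def by blast
  have "H \<subseteq> F" if F: "tau_filter M meet mult tau F" "F \<noteq> {one}" for F
    using least hoop_filter_Ker_trace tau_filter_meets_Ker[OF nontrivial disj F] F(1)
    unfolding tau_filter_def by blast
  then show ?thesis
    using SI_state_BL_if_least_generator[OF H_M H_ne H_mult H(2)]
      tau_up_closure_Ker_subset[OF H_Ker H_ne] by blast
qed

end

theorem theorem2p3:
  fixes M :: "'a set" and meet join mult imp :: "'a \<Rightarrow> 'a \<Rightarrow> 'a"
    and zero one :: 'a and tau :: "'a \<Rightarrow> 'a"
  assumes "state_BL_algebra M meet join mult imp zero one tau"
    and "faithful M one tau \<longrightarrow> SI_BL (tau ` M) meet mult one"
    and "Ker M one tau = {one} \<or> SI_hoop (Ker M one tau) mult imp one"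
    and "\<forall>x\<in>Ker M one tau. \<forall>y\<in>tau ` M. join x y = one \<longrightarrow> x = one \<or> y = one"
  shows "SI_state_BL M meet mult one tau"
proof -
  interpret state_bl_algebra M meet join mult imp zero one tau
    using assms(1) unfolding state_BL_algebra_def by unfold_locales blast+
  show ?thesis
  proof (cases "faithful M one tau")
    case True
    then show ?thesis using assms(2) SI_state_BL_if_faithful by blast
  next
    case False
    then show ?thesis
      using assms(3,4) SI_state_BL_if_Ker_SI unfolding faithful_def by blast
  qed
qed

end
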